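(* Let $K$ be a field and $R$ a von Neumann regular, right self-injective $K$-algebra possessing a bounded basis. Then $R$ is completely reducible (semisimple).
   Context: Let $B$ be a $K$-linear basis of a $K$-algebra $R$. For $r\in R$ write $r=\sum_{b\in B}bk_b$, $\mathrm{supp}(r)=\{b\mid k_b\neq0\}$, $\mathrm{cs}(r)=|\mathrm{supp}(r)|$. $B$ is $k$-bounded ($1\le k<\omega$) if $\mathrm{cs}(bb')\le k$ for all $b,b'\in B$, and $B$ is bounded if it is $k$-bounded for some $1\le k<\omega$. *)

theory Defs
  imports Complex_Main
begin

definition is_K_algebra :: "('k::field \<Rightarrow> 'r::ring_1 \<Rightarrow> 'r) \<Rightarrow> bool" where
  "is_K_algebra scale \<longleftrightarrow> vector_space scale \<and>
     (\<forall>k a b. scale k (a * b) = scale k a * b \<and> scale k (a * b) = a * scale k b)"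

definition is_basis :: "('k::field \<Rightarrow> 'r::ring_1 \<Rightarrow> 'r) \<Rightarrow> 'r set \<Rightarrow> bool" where
  "is_basis scale B \<longleftrightarrow> \<not> module.dependent scale B \<and> module.span scale B = UNIV"

definition supp :: "('k::field \<Rightarrow> 'r::ring_1 \<Rightarrow> 'r) \<Rightarrow> 'r set \<Rightarrow> 'r \<Rightarrow> 'r set" where
  "supp scale B r = {b\<in>B. module.representation scale B r b \<noteq> 0}"

definition cs :: "('k::field \<Rightarrow> 'r::ring_1 \<Rightarrow> 'r) \<Rightarrow> 'r set \<Rightarrow> 'r \<Rightarrow> nat" where
  "cs scale B r = card (supp scale B r)"

definition k_bounded :: "('k::field \<Rightarrow> 'r::ring_1 \<Rightarrow> 'r) \<Rightarrow> 'r set \<Rightarrow> nat \<Rightarrow> bool" where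
  "k_bounded scale B k \<longleftrightarrow> 1 \<le> k \<and> (\<forall>b\<in>B. \<forall>b'\<in>B. cs scale B (b * b') \<le> k)"

definition bounded_basis :: "('k::field \<Rightarrow> 'r::ring_1 \<Rightarrow> 'r) \<Rightarrow> 'r set \<Rightarrow> bool" where
  "bounded_basis scale B \<longleftrightarrow> is_basis scale B \<and> (\<exists>k. k_bounded scale B k)"

definition von_Neumann_regular :: "'r::ring_1 itself \<Rightarrow> bool" where
  "von_Neumann_regular _ \<longleftrightarrow> (\<forall>a::'r. \<exists>x. a * x * a = a)"

definition right_ideal :: "'r::ring_1 set \<Rightarrow> bool" where
  "right_ideal I \<longleftrightarrow> 0 \<in> I \<and> (\<forall>x\<in>I. \<forall>y\<in>I. x + y \<in> I) \<and> (\<forall>x\<in>I. - x \<in> I)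
     \<and> (\<forall>x\<in>I. \<forall>r. x * r \<in> I)"

definition right_hom_on :: "'r::ring_1 set \<Rightarrow> ('r \<Rightarrow> 'r) \<Rightarrow> bool" where
  "right_hom_on I f \<longleftrightarrow> (\<forall>x\<in>I. \<forall>y\<in>I. f (x + y) = f x + f y) \<and> (\<forall>x\<in>I. \<forall>r. f (x * r) = f x * r)"

text \<open>Right self-injective (R_R injective), via Baer's criterion: every right module
  homomorphism from a right ideal into R_R extends to an endomorphism of R_R.\<close>
definition right_self_injective :: "'r::ring_1 itself \<Rightarrow> bool" where
  "right_self_injective _ \<longleftrightarrow>
     (\<forall>(I::'r set) f. right_ideal I \<and> right_hom_on I f \<longrightarrow>
        (\<exists>g. right_hom_on UNIV g \<and> (\<forall>x\<in>I. g x = f x)))"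

definition minimal_right_ideal :: "'r::ring_1 set \<Rightarrow> bool" where
  "minimal_right_ideal I \<longleftrightarrow> right_ideal I \<and> I \<noteq> {0} \<and>
     (\<forall>J. right_ideal J \<and> J \<subseteq> I \<longrightarrow> J = {0} \<or> J = I)"

definition completely_reducible :: "'r::ring_1 itself \<Rightarrow> bool" where
  "completely_reducible _ \<longleftrightarrow>
     (\<forall>r::'r. \<exists>(n::nat) xs. (\<forall>i<n. \<exists>I. minimal_right_ideal I \<and> xs i \<in> I) \<and> r = (\<Sum>i<n. xs i))"

end

theory Submission
  imports Defs "HOL-Library.Set_Algebras" "HOL-Library.Nat_Bijection"
begin

text \<open>
  In a von Neumann regular ring every nonzero idempotent either generates a minimal right ideal
  or splits into two nonzero orthogonal idempotents, so if \<open>R\<close> is not completely reducible one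
  can split off idempotents forever and obtains an infinite family \<open>f 0, f 1, ...\<close> of nonzero
  orthogonal idempotents. This is impossible when \<open>R\<close> is right self-injective with a
  \<open>k\<close>-bounded basis. Let \<open>I\<close> be the direct sum of the \<open>f j R\<close> and let \<open>E\<close> be \<open>I\<close> plus a
  maximal right ideal meeting \<open>I\<close> trivially; by regularity \<open>E\<close> has zero left annihilator.
  By self-injectivity every diagonal map, acting on \<open>f j R\<close> as left multiplication by
  \<open>\<sigma> j\<close>, is left multiplication by an element of \<open>R\<close>, unique on \<open>E\<close>. Partition the
  indices into infinitely many infinite blocks and let \<open>x i\<close> realise the projection onto
  block \<open>i\<close>. The left ideal \<open>R x i\<close> contains the independent elements \<open>f j x i\<close>, \<open>j\<close> in
  block \<open>i\<close>, hence some \<open>r i * x i\<close> of support larger than \<open>k i cs (x i)\<close>. A single \<open>g\<close>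
  realising \<open>r i\<close> on block \<open>i\<close> satisfies \<open>g x i = r i x i\<close>, while boundedness gives
  \<open>cs (g x i) \<le> k cs g cs (x i)\<close>; take \<open>i = cs g\<close>.
\<close>

section \<open>Right ideals\<close>

lemma right_ideal_zero: "right_ideal I \<Longrightarrow> 0 \<in> I"
  and right_ideal_add: "right_ideal I \<Longrightarrow> x \<in> I \<Longrightarrow> y \<in> I \<Longrightarrow> x + y \<in> I"
  and right_ideal_uminus: "right_ideal I \<Longrightarrow> x \<in> I \<Longrightarrow> - x \<in> I"
  and right_ideal_mult: "right_ideal I \<Longrightarrow> x \<in> I \<Longrightarrow> x * r \<in> I"
  unfolding right_ideal_def by blast+

lemma right_ideal_diff: "right_ideal I \<Longrightarrow> x \<in> I \<Longrightarrow> y \<in> I \<Longrightarrow> x - y \<in> I"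
  using right_ideal_add[of I x "- y"] right_ideal_uminus[of I y] by simp

lemma right_ideal_principal: "right_ideal (range ((*) (c::'r::ring_1)))"
  unfolding right_ideal_def
  by (auto simp: distrib_left[symmetric] intro: range_eqI[of _ _ 0] range_eqI[of _ _ "- _"])
     (metis mult.assoc rangeI)

lemma right_ideal_set_plus:
  assumes I: "right_ideal I" and J: "right_ideal J"
  shows "right_ideal (I + J)"
  unfolding right_ideal_def
proof (intro conjI ballI allI)
  show "0 \<in> I + J"
    using set_plus_intro[OF right_ideal_zero[OF I] right_ideal_zero[OF J]] by simp
next
  fix x y assume "x \<in> I + J" "y \<in> I + J"
  then obtain a b c d where "x = a + b" "y = c + d" "a \<in> I" "b \<in> J" "c \<in> I" "d \<in> J"
    by (auto elim!: set_plus_elim)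
  then show "x + y \<in> I + J"
    using set_plus_intro[OF right_ideal_add[OF I] right_ideal_add[OF J], of a c b d]
    by (simp add: algebra_simps)
next
  fix x assume "x \<in> I + J"
  then obtain a b where "x = a + b" "a \<in> I" "b \<in> J"
    by (auto elim!: set_plus_elim)
  then show "- x \<in> I + J"
    using set_plus_intro[OF right_ideal_uminus[OF I] right_ideal_uminus[OF J], of a b] by simp
next
  fix x r assume "x \<in> I + J"
  then obtain a b where ab: "x = a + b" "a \<in> I" "b \<in> J"
    by (auto elim!: set_plus_elim)
  then show "x * r \<in> I + J"
    using set_plus_intro[OF right_ideal_mult[OF I ab(2)] right_ideal_mult[OF J ab(3)]]
    by (simp add: distrib_right)
qed

lemma subset_set_plus_right_ideal: "right_ideal J \<Longrightarrow> I \<subseteq> I + J"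
  using set_plus_intro[of _ I 0 J] right_ideal_zero[of J] by force

lemma right_ideal_Union_chain:
  assumes "\<C> \<noteq> {}" and ideals: "\<And>X. X \<in> \<C> \<Longrightarrow> right_ideal X"
    and chain: "\<And>X Y. X \<in> \<C> \<Longrightarrow> Y \<in> \<C> \<Longrightarrow> X \<subseteq> Y \<or> Y \<subseteq> X"
  shows "right_ideal (\<Union>\<C>)"
  unfolding right_ideal_def
proof (intro conjI ballI allI)
  show "0 \<in> \<Union>\<C>"
    using \<open>\<C> \<noteq> {}\<close> ideals right_ideal_zero by blast
next
  fix x y assume "x \<in> \<Union>\<C>" "y \<in> \<Union>\<C>"
  then obtain X Y where "X \<in> \<C>" "Y \<in> \<C>" "x \<in> X" "y \<in> Y" by blast
  with chain[of X Y] show "x + y \<in> \<Union>\<C>"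
    using ideals right_ideal_add by blast
qed (use ideals right_ideal_uminus right_ideal_mult in blast)+

lemma exists_maximal_disjoint_right_ideal:
  fixes I :: "'r::ring_1 set"
  assumes "right_ideal I"
  obtains C where "right_ideal C" and "C \<inter> I = {0}"
    and "\<And>X. right_ideal X \<Longrightarrow> X \<inter> I = {0} \<Longrightarrow> C \<subseteq> X \<Longrightarrow> X = C"
proof -
  let ?A = "{C. right_ideal C \<and> C \<inter> I = {0}}"
  have "right_ideal {0::'r}"
    unfolding right_ideal_def by simp
  then have "{0} \<in> ?A"
    using right_ideal_zero[OF assms] by auto
  moreover have "\<Union>\<C> \<in> ?A" if "\<C> \<noteq> {}" and chain: "subset.chain ?A \<C>" for \<C>
  proof -
    have members: "right_ideal X" "X \<inter> I = {0}" if "X \<in> \<C>" for X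
      using chain that unfolding subset_chain_def by blast+
    have "right_ideal (\<Union>\<C>)"
      using chain unfolding subset_chain_def
      by (intro right_ideal_Union_chain[OF \<open>\<C> \<noteq> {}\<close> members(1)]) blast+
    moreover have "\<Union>\<C> \<inter> I = {0}"
    proof
      show "\<Union>\<C> \<inter> I \<subseteq> {0}"
        using members(2) by blast
      obtain X where "X \<in> \<C>"
        using \<open>\<C> \<noteq> {}\<close> by blast
      then show "{0} \<subseteq> \<Union>\<C> \<inter> I"
        using members(2) by blast
    qed
    ultimately show ?thesis by blast
  qed
  ultimately have "\<exists>C\<in>?A. \<forall>X\<in>?A. C \<subseteq> X \<longrightarrow> X = C"
    by (intro subset_Zorn_nonempty) blast+
  then obtain C where C: "right_ideal C" "C \<inter> I = {0}" and maximal: "\<forall>X\<in>?A. C \<subseteq> X \<longrightarrow> X = C"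
    by blast
  show thesis
    by (rule that[OF C]) (use maximal in blast)
qed

lemma disjoint_set_plus_annihilating_idempotent:
  assumes I: "right_ideal I" and C: "right_ideal C" and disjoint: "C \<inter> I = {0}"
    and "e * e = e" and annihilates: "\<And>v. v \<in> I + C \<Longrightarrow> e * v = 0"
  shows "(C + range ((*) e)) \<inter> I = {0}"
proof
  show "{0} \<subseteq> (C + range ((*) e)) \<inter> I"
    using right_ideal_zero[OF right_ideal_set_plus[OF C right_ideal_principal]] right_ideal_zero[OF I]
    by blast
next
  show "(C + range ((*) e)) \<inter> I \<subseteq> {0}"
  proof
    fix x assume x: "x \<in> (C + range ((*) e)) \<inter> I"
    then obtain c r where cr: "x = c + e * r" "c \<in> C"
      by (auto elim!: set_plus_elim)
    have "x + - c \<in> I + C"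
      using x set_plus_intro[OF _ right_ideal_uminus[OF C cr(2)], of x I] by blast
    then have "e * (e * r) = 0"
      using annihilates cr(1) by (simp add: algebra_simps)
    then have "e * r = 0"
      using \<open>e * e = e\<close> by (simp add: mult.assoc[symmetric])
    then show "x \<in> {0}"
      using x cr disjoint by auto
  qed
qed

lemma zero_left_annihilator_of_maximal_complement:
  fixes z :: "'r::ring_1"
  assumes reg: "von_Neumann_regular TYPE('r)"
    and I: "right_ideal I" and C: "right_ideal C" and disjoint: "C \<inter> I = {0}"
    and maximal: "\<And>X. right_ideal X \<Longrightarrow> X \<inter> I = {0} \<Longrightarrow> C \<subseteq> X \<Longrightarrow> X = C"
    and annihilates: "\<And>v. v \<in> I + C \<Longrightarrow> z * v = 0"
  shows "z = 0"
proof (rule ccontr)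
  assume "z \<noteq> 0"
  obtain y where y: "z * y * z = z"
    using reg von_Neumann_regular_def by blast
  \<comment> \<open>the idempotent \<open>e = y z\<close> also annihilates \<open>I + C\<close>, so \<open>C + e R\<close> contradicts maximality\<close>
  define e where "e = y * z"
  have e_idem: "e * e = e"
    unfolding e_def using y by (metis mult.assoc)
  have e_ann: "e * v = 0" if "v \<in> I + C" for v
    unfolding e_def using annihilates[OF that] by (simp add: mult.assoc)
  have "e \<noteq> 0"
    using y \<open>z \<noteq> 0\<close> unfolding e_def by (metis mult.assoc mult_zero_right)
  let ?C' = "C + range ((*) e)"
  have C'_ideal: "right_ideal ?C'"
    using C right_ideal_principal by (rule right_ideal_set_plus)
  have "?C' = C"
    using maximal[OF C'_ideal disjoint_set_plus_annihilating_idempotent[OF I C disjoint e_idem e_ann]]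
      subset_set_plus_right_ideal[OF right_ideal_principal] by blast
  moreover have "e \<in> ?C'"
    using set_plus_intro[OF right_ideal_zero[OF C] rangeI[of "(*) e" 1]] by simp
  ultimately have "e \<in> I + C"
    using set_plus_intro[OF right_ideal_zero[OF I], of e C] by simp
  then show False
    using e_ann e_idem \<open>e \<noteq> 0\<close> by metis
qed

lemma direct_sum_component_unique:
  assumes I: "right_ideal I" and C: "right_ideal C" and disjoint: "C \<inter> I = {0}"
    and "a \<in> I" "b \<in> I" "v - a \<in> C" "v - b \<in> C"
  shows "a = b"
proof -
  have "a - b = (v - b) - (v - a)"
    by simp
  then have "a - b \<in> C"
    using right_ideal_diff[OF C \<open>v - b \<in> C\<close> \<open>v - a \<in> C\<close>] by simp
  moreover have "a - b \<in> I"
    using right_ideal_diff[OF I \<open>a \<in> I\<close> \<open>b \<in> I\<close>] .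
  ultimately have "a - b = 0"
    using disjoint by blast
  then show ?thesis
    by simp
qed

lemma direct_sum_retraction:
  fixes I C :: "'r::ring_1 set"
  assumes I: "right_ideal I" and C: "right_ideal C" and disjoint: "C \<inter> I = {0}"
  obtains \<pi> where "right_hom_on (I + C) \<pi>" and "\<pi> ` (I + C) \<subseteq> I" and "\<And>w. w \<in> I \<Longrightarrow> \<pi> w = w"
proof -
  define \<pi> where "\<pi> v = (SOME a. a \<in> I \<and> v - a \<in> C)" for v
  have \<pi>: "\<pi> v \<in> I" "v - \<pi> v \<in> C" if v: "v \<in> I + C" for v
  proof -
    obtain a c where "v = a + c" "a \<in> I" "c \<in> C"
      using v by (auto elim!: set_plus_elim)
    then have "\<exists>a. a \<in> I \<and> v - a \<in> C" by auto
    then show "\<pi> v \<in> I" "v - \<pi> v \<in> C"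
      unfolding \<pi>_def by (metis (mono_tags, lifting) someI_ex)+
  qed
  have \<pi>_unique: "\<pi> v = a" if "v \<in> I + C" "a \<in> I" "v - a \<in> C" for v a
    using direct_sum_component_unique[OF I C disjoint] \<pi>[OF that(1)] that(2,3) by blast
  have sum_ideal: "right_ideal (I + C)"
    using I C by (rule right_ideal_set_plus)
  have "right_hom_on (I + C) \<pi>"
    unfolding right_hom_on_def
  proof (intro conjI ballI allI)
    fix x y assume xy: "x \<in> I + C" "y \<in> I + C"
    have "x + y - (\<pi> x + \<pi> y) \<in> C"
      using right_ideal_add[OF C \<pi>(2)[OF xy(1)] \<pi>(2)[OF xy(2)]] by (metis add_diff_add)
    then show "\<pi> (x + y) = \<pi> x + \<pi> y"
      using \<pi>_unique right_ideal_add[OF sum_ideal xy] right_ideal_add[OF I \<pi>(1)[OF xy(1)] \<pi>(1)[OF xy(2)]]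
      by blast
  next
    fix x r assume x: "x \<in> I + C"
    have "x * r - \<pi> x * r \<in> C"
      using right_ideal_mult[OF C \<pi>(2)[OF x]] by (simp add: left_diff_distrib)
    then show "\<pi> (x * r) = \<pi> x * r"
      using \<pi>_unique right_ideal_mult[OF sum_ideal x] right_ideal_mult[OF I \<pi>(1)[OF x]] by blast
  qed
  moreover have "\<pi> w = w" if "w \<in> I" for w
    using \<pi>_unique[of w w] subset_set_plus_right_ideal[OF C] right_ideal_zero[OF C] that by auto
  ultimately show thesis
    using that \<pi>(1) by blast
qed

lemma right_ideal_retract_of_faithful:
  fixes I :: "'r::ring_1 set"
  assumes reg: "von_Neumann_regular TYPE('r)" and I: "right_ideal I"
  obtains E \<pi> where "right_ideal E" and "I \<subseteq> E" and "right_hom_on E \<pi>" and "\<pi> ` E \<subseteq> I"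
    and "\<And>w. w \<in> I \<Longrightarrow> \<pi> w = w" and "\<And>z. (\<And>v. v \<in> E \<Longrightarrow> z * v = 0) \<Longrightarrow> z = 0"
proof -
  obtain C where C: "right_ideal C" "C \<inter> I = {0}"
    and maximal: "\<And>X. right_ideal X \<Longrightarrow> X \<inter> I = {0} \<Longrightarrow> C \<subseteq> X \<Longrightarrow> X = C"
    using exists_maximal_disjoint_right_ideal[OF I] by blast
  obtain \<pi> where "right_hom_on (I + C) \<pi>" "\<pi> ` (I + C) \<subseteq> I" "\<And>w. w \<in> I \<Longrightarrow> \<pi> w = w"
    using direct_sum_retraction[OF I C] by blast
  with that show thesis
    using right_ideal_set_plus[OF I C(1)] subset_set_plus_right_ideal[OF C(1)]
      zero_left_annihilator_of_maximal_complement[OF reg I C maximal] by blast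
qed

lemma right_hom_is_left_mult:
  fixes h :: "'r::ring_1 \<Rightarrow> 'r"
  assumes "right_self_injective TYPE('r)" and "right_ideal E" and "right_hom_on E h"
  obtains x where "\<And>v. v \<in> E \<Longrightarrow> h v = x * v"
proof -
  obtain g where g: "right_hom_on UNIV g" "\<forall>v\<in>E. g v = h v"
    using assms unfolding right_self_injective_def by blast
  have "g v = g 1 * v" for v
    using g(1) unfolding right_hom_on_def by (metis UNIV_I mult_1_left)
  then show thesis
    using that g(2) by metis
qed

section \<open>Splitting off idempotents\<close>

definition idem_le :: "'r::ring_1 \<Rightarrow> 'r \<Rightarrow> bool" where
  "idem_le p c \<longleftrightarrow> c * p = p \<and> p * c = p"

lemma idem_le_refl: "c * c = c \<Longrightarrow> idem_le c c"
  unfolding idem_le_def by simp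

lemma idem_le_trans: "idem_le q p \<Longrightarrow> idem_le p c \<Longrightarrow> idem_le q c"
  unfolding idem_le_def by (metis mult.assoc)

lemma idem_le_complement:
  assumes "c * c = c" and "idem_le p c"
  shows "idem_le (c - p) c"
    and "p * p = p \<Longrightarrow> (c - p) * (c - p) = c - p"
    and "p * p = p \<Longrightarrow> p * (c - p) = 0"
    and "p * p = p \<Longrightarrow> (c - p) * p = 0"
  using assms unfolding idem_le_def by (simp_all add: algebra_simps)

lemma orthogonal_if_idem_le: "idem_le q d \<Longrightarrow> p * d = 0 \<Longrightarrow> d * p = 0 \<Longrightarrow> p * q = 0 \<and> q * p = 0"
  unfolding idem_le_def by (metis mult.assoc mult_zero_left mult_zero_right)

locale orthogonal_idempotents =
  fixes f :: "nat \<Rightarrow> 'r::ring_1"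
  assumes idem: "f n * f n = f n"
    and nonzero: "f n \<noteq> 0"
    and orth: "n \<noteq> m \<Longrightarrow> f n * f m = 0"

lemma orthogonal_idempotents_if_splitting:
  fixes M :: "'r::ring_1 set"
  assumes "c\<^sub>0 \<in> M"
    and idem: "\<And>c. c \<in> M \<Longrightarrow> c * c = c"
    and split: "\<And>c. c \<in> M \<Longrightarrow> \<exists>p. p * p = p \<and> p \<noteq> 0 \<and> idem_le p c \<and> c - p \<in> M"
  shows "\<exists>f :: nat \<Rightarrow> 'r. orthogonal_idempotents f"
proof -
  obtain step where step: "\<And>c. c \<in> M \<Longrightarrow>
      step c * step c = step c \<and> step c \<noteq> 0 \<and> idem_le (step c) c \<and> c - step c \<in> M"
    using split by metis
  define c where "c n = ((\<lambda>c. c - step c) ^^ n) c\<^sub>0" for n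
  have c_Suc: "c (Suc n) = c n - step (c n)" for n
    by (simp add: c_def)
  have c_M: "c n \<in> M" for n
    by (induction n) (simp_all add: c_def \<open>c\<^sub>0 \<in> M\<close> step)
  have c_antimono: "idem_le (c (n + d)) (c n)" for n d
  proof (induction d)
    case 0
    show ?case using idem[OF c_M] by (simp add: idem_le_refl)
  next
    case (Suc d)
    have "idem_le (c (Suc (n + d))) (c (n + d))"
      unfolding c_Suc using idem_le_complement(1) idem c_M step by blast
    then show ?case using Suc.IH idem_le_trans by simp
  qed
  have orth_lt: "step (c n) * step (c m) = 0 \<and> step (c m) * step (c n) = 0" if "n < m" for n m
  proof -
    have "idem_le (c m) (c (Suc n))"
      using c_antimono[of "Suc n" "m - Suc n"] that by simp
    then have le: "idem_le (step (c m)) (c (Suc n))"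
      using step[OF c_M] idem_le_trans by blast
    have "step (c n) * step (c n) = step (c n)" "idem_le (step (c n)) (c n)"
      using step[OF c_M] by blast+
    then have "step (c n) * c (Suc n) = 0" "c (Suc n) * step (c n) = 0"
      unfolding c_Suc using idem_le_complement(3,4)[OF idem[OF c_M]] by blast+
    with le show ?thesis
      by (rule orthogonal_if_idem_le)
  qed
  have "orthogonal_idempotents (\<lambda>n. step (c n))"
  proof
    fix n m :: nat
    show "step (c n) * step (c n) = step (c n)" "step (c n) \<noteq> 0"
      using step c_M by auto
    assume "n \<noteq> m"
    then show "step (c n) * step (c m) = 0"
      using orth_lt by (cases "n < m") (auto simp: not_less_iff_gr_or_eq)
  qed
  then show ?thesis by blast
qed

lemma nonminimal_idempotent_splits:
  fixes c :: "'r::ring_1"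
  assumes reg: "von_Neumann_regular TYPE('r)" and "c * c = c" and "c \<noteq> 0"
    and "\<not> minimal_right_ideal (range ((*) c))"
  shows "\<exists>p. p * p = p \<and> p \<noteq> 0 \<and> idem_le p c \<and> c - p \<noteq> 0"
proof -
  have c_in: "c \<in> range ((*) c)"
    by (metis mult.right_neutral rangeI)
  then obtain J where J: "right_ideal J" "J \<subseteq> range ((*) c)" "J \<noteq> {0}" "J \<noteq> range ((*) c)"
    using assms(3,4) right_ideal_principal unfolding minimal_right_ideal_def by blast
  then obtain a where a: "a \<in> J" "a \<noteq> 0"
    using right_ideal_zero by blast
  obtain z where z: "a * z * a = a"
    using reg von_Neumann_regular_def by blast
  have ca: "c * a = a"
    using a(1) J(2) \<open>c * c = c\<close> by (auto simp: mult.assoc[symmetric])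
  have az_J: "a * z \<in> J"
    using right_ideal_mult[OF J(1) a(1)] .
  \<comment> \<open>\<open>a z\<close> is an idempotent generator of \<open>a R\<close>; multiplying by \<open>c\<close> on the right puts it below \<open>c\<close>\<close>
  define p where "p = a * z * c"
  have "p * p = p" "idem_le p c"
    unfolding p_def idem_le_def using ca z \<open>c * c = c\<close> by (metis mult.assoc)+
  moreover have "p \<noteq> 0"
  proof
    assume "p = 0"
    then have "p * a = 0" by simp
    moreover have "p * a = a"
      unfolding p_def using ca z by (metis mult.assoc)
    ultimately show False
      using a by simp
  qed
  moreover have "c - p \<noteq> 0"
  proof
    assume "c - p = 0"
    then have "c = a * z * c"
      unfolding p_def by simp
    then have "c \<in> J"
      using right_ideal_mult[OF J(1) az_J, of c] by simp
    then have "range ((*) c) \<subseteq> J"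
      using right_ideal_mult[OF J(1)] by blast
    then show False
      using J(2,4) by blast
  qed
  ultimately show ?thesis by blast
qed

lemma exists_minimal_idempotent_below:
  fixes c :: "'r::ring_1"
  assumes reg: "von_Neumann_regular TYPE('r)"
    and no_orth: "\<nexists>f :: nat \<Rightarrow> 'r. orthogonal_idempotents f"
    and "c * c = c" and "c \<noteq> 0"
  shows "\<exists>g. g * g = g \<and> g \<noteq> 0 \<and> idem_le g c \<and> minimal_right_ideal (range ((*) g))"
proof (rule ccontr)
  assume none: "\<not> ?thesis"
  define M where "M = {c :: 'r. c * c = c \<and> c \<noteq> 0 \<and>
    \<not> (\<exists>g. g * g = g \<and> g \<noteq> 0 \<and> idem_le g c \<and> minimal_right_ideal (range ((*) g)))}"
  have "\<exists>p. p * p = p \<and> p \<noteq> 0 \<and> idem_le p d \<and> d - p \<in> M" if "d \<in> M" for d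
  proof -
    have d: "d * d = d" "d \<noteq> 0"
      and d_none: "\<nexists>g. g * g = g \<and> g \<noteq> 0 \<and> idem_le g d \<and> minimal_right_ideal (range ((*) g))"
      using that unfolding M_def by blast+
    then have "\<not> minimal_right_ideal (range ((*) d))"
      using idem_le_refl by blast
    then obtain p where p: "p * p = p" "p \<noteq> 0" "idem_le p d" "d - p \<noteq> 0"
      using nonminimal_idempotent_splits[OF reg d] by blast
    have "idem_le g d" if "idem_le g (d - p)" for g
      using idem_le_trans[OF that idem_le_complement(1)[OF d(1) p(3)]] .
    then have "d - p \<in> M"
      using d_none p(4) idem_le_complement(2)[OF d(1) p(3) p(1)] unfolding M_def by blast
    with p show ?thesis by blast
  qed
  moreover have "c \<in> M"
    using assms none unfolding M_def by blast
  moreover have "d * d = d" if "d \<in> M" for d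
    using that unfolding M_def by blast
  ultimately show False
    using orthogonal_idempotents_if_splitting[of c M] no_orth by blast
qed

definition in_socle :: "'r::ring_1 \<Rightarrow> bool" where
  "in_socle x \<longleftrightarrow> (\<exists>(n::nat) xs. (\<forall>i<n. \<exists>I. minimal_right_ideal I \<and> xs i \<in> I) \<and> x = (\<Sum>i<n. xs i))"

lemma completely_reducible_iff_socle:
  "completely_reducible TYPE('r::ring_1) \<longleftrightarrow> (\<forall>x::'r. in_socle x)"
  unfolding completely_reducible_def in_socle_def by blast

lemma zero_in_socle: "in_socle 0"
  unfolding in_socle_def by force

lemma socle_add_minimal:
  assumes "in_socle x" and "minimal_right_ideal I" and "y \<in> I"
  shows "in_socle (x + y)"
proof -
  obtain n :: nat and xs where xs: "\<forall>i<n. \<exists>I. minimal_right_ideal I \<and> xs i \<in> I" "x = (\<Sum>i<n. xs i)"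
    using assms(1) unfolding in_socle_def by blast
  define ys where "ys = xs(n := y)"
  have "x + y = (\<Sum>i<Suc n. ys i)"
    using xs(2) by (simp add: ys_def)
  moreover have "\<forall>i<Suc n. \<exists>I. minimal_right_ideal I \<and> ys i \<in> I"
    using xs(1) assms(2,3) by (auto simp: ys_def less_Suc_eq)
  ultimately show ?thesis
    unfolding in_socle_def by blast
qed

lemma completely_reducible_if_no_orthogonal_idempotents:
  assumes reg: "von_Neumann_regular TYPE('r::ring_1)"
    and no_orth: "\<nexists>f :: nat \<Rightarrow> 'r. orthogonal_idempotents f"
  shows "completely_reducible TYPE('r)"
proof (rule ccontr)
  assume "\<not> completely_reducible TYPE('r)"
  define M where "M = {c :: 'r. c * c = c \<and> \<not> range ((*) c) \<subseteq> Collect in_socle}"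
  have "1 \<in> M"
    using \<open>\<not> completely_reducible TYPE('r)\<close> by (auto simp: M_def completely_reducible_iff_socle)
  moreover
  have "\<exists>g. g * g = g \<and> g \<noteq> 0 \<and> idem_le g c \<and> c - g \<in> M" if "c \<in> M" for c
  proof -
    have "c \<noteq> 0"
      using that zero_in_socle unfolding M_def by auto
    then obtain g where g: "g * g = g" "g \<noteq> 0" "idem_le g c" "minimal_right_ideal (range ((*) g))"
      using exists_minimal_idempotent_below[OF reg no_orth] \<open>c \<in> M\<close> unfolding M_def by blast
    have "in_socle (c * r)" if "in_socle ((c - g) * r)" for r
      using socle_add_minimal[OF that g(4), of "g * r"] by (simp add: algebra_simps)
    then have "\<not> range ((*) (c - g)) \<subseteq> Collect in_socle"
      using \<open>c \<in> M\<close> unfolding M_def by blast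
    then have "c - g \<in> M"
      using \<open>c \<in> M\<close> g idem_le_complement unfolding M_def by blast
    with g show ?thesis by blast
  qed
  moreover have "c * c = c" if "c \<in> M" for c
    using that unfolding M_def by blast
  ultimately show False
    using orthogonal_idempotents_if_splitting[of 1 M] no_orth by blast
qed

section \<open>The direct sum of the ideals \<open>f j R\<close>\<close>

lemma sum_lessThan_eq_if_vanishing:
  "(\<And>j. j \<ge> N \<Longrightarrow> g j = 0) \<Longrightarrow> N \<le> M \<Longrightarrow> (\<Sum>j<M. g j) = (\<Sum>j<(N::nat). g j)"
  by (rule sum.mono_neutral_right) auto

context orthogonal_idempotents
begin

text \<open>\<open>in_dsum_below N w\<close> says that \<open>w\<close> lies in \<open>f 0 R + ... + f (N - 1) R\<close>.\<close>

definition in_dsum_below :: "nat \<Rightarrow> 'r \<Rightarrow> bool" where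
  "in_dsum_below N w \<longleftrightarrow> (\<forall>j\<ge>N. f j * w = 0) \<and> w = (\<Sum>j<N. f j * w)"

definition dsum :: "'r set" where
  "dsum = {w. \<exists>N. in_dsum_below N w}"

definition dsum_bound :: "'r \<Rightarrow> nat" where
  "dsum_bound w = (SOME N. in_dsum_below N w)"

definition diag :: "(nat \<Rightarrow> 'r) \<Rightarrow> 'r \<Rightarrow> 'r" where
  "diag \<sigma> w = (\<Sum>j<dsum_bound w. \<sigma> j * (f j * w))"

lemma in_dsum_below_mono:
  assumes "in_dsum_below N w" and "N \<le> M"
  shows "in_dsum_below M w"
  using assms sum_lessThan_eq_if_vanishing[of N "\<lambda>j. f j * w" M]
  unfolding in_dsum_below_def by auto

lemma in_dsum_belowI: "in_dsum_below N w \<Longrightarrow> w \<in> dsum"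
  unfolding dsum_def by blast

lemma in_dsum_below_dsum_bound: "w \<in> dsum \<Longrightarrow> in_dsum_below (dsum_bound w) w"
  unfolding dsum_def dsum_bound_def by (auto intro: someI_ex)

lemma dsum_common_bound:
  assumes "a \<in> dsum" and "b \<in> dsum"
  obtains N where "in_dsum_below N a" and "in_dsum_below N b"
  using in_dsum_below_mono[OF in_dsum_below_dsum_bound[OF assms(1)], of "max (dsum_bound a) (dsum_bound b)"]
    in_dsum_below_mono[OF in_dsum_below_dsum_bound[OF assms(2)], of "max (dsum_bound a) (dsum_bound b)"]
  by simp

lemma in_dsum_below_uminus: "in_dsum_below N a \<Longrightarrow> in_dsum_below N (- a)"
  unfolding in_dsum_below_def by (auto simp: sum_negf)

lemma in_dsum_below_add: "in_dsum_below N a \<Longrightarrow> in_dsum_below N b \<Longrightarrow> in_dsum_below N (a + b)"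
  unfolding in_dsum_below_def by (auto simp: distrib_left sum.distrib)

lemma in_dsum_below_mult: "in_dsum_below N a \<Longrightarrow> in_dsum_below N (a * r)"
  unfolding in_dsum_below_def by (auto simp: mult.assoc[symmetric] sum_distrib_right[symmetric])

lemma right_ideal_dsum: "right_ideal dsum"
  unfolding right_ideal_def
proof (intro conjI ballI allI)
  show "0 \<in> dsum"
    by (rule in_dsum_belowI[of 0]) (simp add: in_dsum_below_def)
next
  fix x y assume "x \<in> dsum" "y \<in> dsum"
  then show "x + y \<in> dsum"
    by (metis dsum_common_bound in_dsum_belowI in_dsum_below_add)
next
  fix x assume "x \<in> dsum"
  then show "- x \<in> dsum"
    by (metis in_dsum_below_dsum_bound in_dsum_belowI in_dsum_below_uminus)
next
  fix x r assume "x \<in> dsum"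
  then show "x * r \<in> dsum"
    using in_dsum_below_dsum_bound in_dsum_below_mult in_dsum_belowI by blast
qed

lemma sum_mult_f: "(\<Sum>j<Suc l. g j * (f j * f l)) = g l * f l"
proof -
  have "(\<Sum>j<Suc l. g j * (f j * f l)) = (\<Sum>j<Suc l. if j = l then g l * f l else 0)"
    by (rule sum.cong) (auto simp: idem orth)
  then show ?thesis by simp
qed

lemma in_dsum_below_f: "in_dsum_below (Suc l) (f l)"
  unfolding in_dsum_below_def using orth sum_mult_f[of "\<lambda>_. 1" l] by auto

lemma f_in_dsum: "f l \<in> dsum"
  using in_dsum_below_f by (rule in_dsum_belowI)

lemma diag_eq:
  assumes "in_dsum_below N w"
  shows "diag \<sigma> w = (\<Sum>j<N. \<sigma> j * (f j * w))"
proof -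
  let ?M = "dsum_bound w" and ?g = "\<lambda>j. \<sigma> j * (f j * w)"
  have "in_dsum_below ?M w"
    using assms by (blast intro: in_dsum_below_dsum_bound in_dsum_belowI)
  then have "sum ?g {..<max N ?M} = sum ?g {..<?M}" "sum ?g {..<max N ?M} = sum ?g {..<N}"
    using assms unfolding in_dsum_below_def by (auto intro!: sum_lessThan_eq_if_vanishing)
  then show ?thesis
    unfolding diag_def by simp
qed

lemma right_hom_on_diag: "right_hom_on dsum (diag \<sigma>)"
  unfolding right_hom_on_def
proof (intro conjI ballI allI)
  fix a b assume "a \<in> dsum" "b \<in> dsum"
  then obtain N where ab: "in_dsum_below N a" "in_dsum_below N b"
    by (rule dsum_common_bound)
  show "diag \<sigma> (a + b) = diag \<sigma> a + diag \<sigma> b"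
    unfolding diag_eq[OF ab(1)] diag_eq[OF ab(2)] diag_eq[OF in_dsum_below_add[OF ab]]
    by (simp add: distrib_left sum.distrib)
next
  fix a r assume "a \<in> dsum"
  then have "in_dsum_below (dsum_bound a) a"
    by (rule in_dsum_below_dsum_bound)
  then show "diag \<sigma> (a * r) = diag \<sigma> a * r"
    by (simp add: diag_eq in_dsum_below_mult sum_distrib_right mult.assoc)
qed

lemma f_mult_diag_sum:
  assumes \<sigma>: "range \<sigma> \<subseteq> {0, 1}" and w: "in_dsum_below N w"
  shows "f l * (\<Sum>j<N. \<sigma> j * (f j * w)) = \<sigma> l * (f l * w)"
proof -
  have "f l * (\<sigma> j * (f j * w)) = \<sigma> j * (f l * f j * w)" for j
  proof -
    have "\<sigma> j = 0 \<or> \<sigma> j = 1"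
      using \<sigma> by auto
    then show ?thesis
      by (auto simp: mult.assoc)
  qed
  then have "f l * (\<Sum>j<N. \<sigma> j * (f j * w)) = (\<Sum>j<N. if j = l then \<sigma> l * (f l * w) else 0)"
    unfolding sum_distrib_left by (intro sum.cong) (auto simp: idem orth)
  also have "\<dots> = \<sigma> l * (f l * w)"
    using w unfolding in_dsum_below_def by auto
  finally show ?thesis .
qed

lemma in_dsum_below_diag:
  assumes "range \<sigma> \<subseteq> {0, 1}" and "in_dsum_below N w"
  shows "in_dsum_below N (diag \<sigma> w)"
  using assms f_mult_diag_sum[OF assms] unfolding diag_eq[OF assms(2)]
  by (simp add: in_dsum_below_def)

lemma diag_in_dsum: "range \<sigma> \<subseteq> {0, 1} \<Longrightarrow> w \<in> dsum \<Longrightarrow> diag \<sigma> w \<in> dsum"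
  by (blast intro: in_dsum_belowI in_dsum_below_diag in_dsum_below_dsum_bound)

lemma diag_diag:
  assumes \<sigma>: "range \<sigma> \<subseteq> {0, 1}" and "w \<in> dsum"
  shows "diag \<tau> (diag \<sigma> w) = diag (\<lambda>j. \<tau> j * \<sigma> j) w"
proof -
  let ?N = "dsum_bound w"
  have w: "in_dsum_below ?N w"
    using \<open>w \<in> dsum\<close> by (rule in_dsum_below_dsum_bound)
  have "diag \<tau> (diag \<sigma> w) = (\<Sum>l<?N. \<tau> l * (f l * diag \<sigma> w))"
    by (rule diag_eq[OF in_dsum_below_diag[OF \<sigma> w]])
  also have "\<dots> = (\<Sum>l<?N. \<tau> l * (\<sigma> l * (f l * w)))"
    unfolding diag_eq[OF w] f_mult_diag_sum[OF \<sigma> w] ..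
  also have "\<dots> = diag (\<lambda>j. \<tau> j * \<sigma> j) w"
    by (simp add: diag_eq[OF w] mult.assoc)
  finally show ?thesis .
qed

lemma diag_f: "diag \<sigma> (f l) = \<sigma> l * f l"
  using diag_eq[OF in_dsum_below_f] sum_mult_f[of \<sigma> l] by simp

lemma diag_scale: "diag (\<lambda>j. c * \<sigma> j) w = c * diag \<sigma> w"
  unfolding diag_def by (simp add: sum_distrib_left mult.assoc)

end

locale dsum_retract = orthogonal_idempotents f for f :: "nat \<Rightarrow> 'r::ring_1" +
  fixes E :: "'r set" and \<pi> :: "'r \<Rightarrow> 'r"
  assumes right_ideal_E: "right_ideal E"
    and dsum_subset: "dsum \<subseteq> E"
    and right_hom_on_\<pi>: "right_hom_on E \<pi>"
    and \<pi>_into: "\<pi> ` E \<subseteq> dsum"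
    and \<pi>_id: "\<And>w. w \<in> dsum \<Longrightarrow> \<pi> w = w"
    and faithful: "\<And>z. (\<And>v. v \<in> E \<Longrightarrow> z * v = 0) \<Longrightarrow> z = 0"
begin

lemma \<pi>_in_dsum: "v \<in> E \<Longrightarrow> \<pi> v \<in> dsum"
  using \<pi>_into by blast

definition realizes :: "'r \<Rightarrow> (nat \<Rightarrow> 'r) \<Rightarrow> bool" where
  "realizes x \<sigma> \<longleftrightarrow> (\<forall>v\<in>E. x * v = diag \<sigma> (\<pi> v))"

lemma exists_realizes:
  assumes "right_self_injective TYPE('r)"
  obtains x where "realizes x \<sigma>"
proof -
  have "right_hom_on E (\<lambda>v. diag \<sigma> (\<pi> v))"
    unfolding right_hom_on_def
  proof (intro conjI ballI allI)
    fix v w assume "v \<in> E" "w \<in> E"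
    then show "diag \<sigma> (\<pi> (v + w)) = diag \<sigma> (\<pi> v) + diag \<sigma> (\<pi> w)"
      using right_hom_on_\<pi> right_hom_on_diag[of \<sigma>] \<pi>_in_dsum unfolding right_hom_on_def by auto
  next
    fix v r assume "v \<in> E"
    then show "diag \<sigma> (\<pi> (v * r)) = diag \<sigma> (\<pi> v) * r"
      using right_hom_on_\<pi> right_hom_on_diag[of \<sigma>] \<pi>_in_dsum unfolding right_hom_on_def by auto
  qed
  then obtain x where "\<And>v. v \<in> E \<Longrightarrow> diag \<sigma> (\<pi> v) = x * v"
    using right_hom_is_left_mult[OF assms right_ideal_E] by blast
  then have "realizes x \<sigma>"
    unfolding realizes_def by simp
  then show thesis
    by (rule that)
qed

lemma realizes_unique:
  assumes "realizes x \<sigma>" and "realizes y \<sigma>"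
  shows "x = y"
proof -
  have "(x - y) * v = 0" if "v \<in> E" for v
    using assms that unfolding realizes_def by (simp add: left_diff_distrib)
  then have "x - y = 0"
    by (rule faithful)
  then show ?thesis
    by simp
qed

lemma realizes_mult:
  assumes \<sigma>: "range \<sigma> \<subseteq> {0, 1}" and x: "realizes x \<sigma>" and y: "realizes y \<tau>"
  shows "realizes (y * x) (\<lambda>j. \<tau> j * \<sigma> j)"
  unfolding realizes_def
proof
  fix v assume "v \<in> E"
  then have "\<pi> v \<in> dsum"
    using \<pi>_into by blast
  then have "diag \<sigma> (\<pi> v) \<in> dsum"
    by (rule diag_in_dsum[OF \<sigma>])
  moreover have "y * x * v = y * diag \<sigma> (\<pi> v)"
    using x \<open>v \<in> E\<close> by (simp add: realizes_def mult.assoc)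
  moreover have "y * u = diag \<tau> u" if "u \<in> dsum" for u
  proof -
    have "y * u = diag \<tau> (\<pi> u)"
      using y dsum_subset that unfolding realizes_def by blast
    then show ?thesis
      by (simp add: \<pi>_id[OF that])
  qed
  ultimately show "y * x * v = diag (\<lambda>j. \<tau> j * \<sigma> j) (\<pi> v)"
    using diag_diag[OF \<sigma> \<open>\<pi> v \<in> dsum\<close>] by simp
qed

lemma realizes_scale: "realizes x \<sigma> \<Longrightarrow> realizes (c * x) (\<lambda>j. c * \<sigma> j)"
  unfolding realizes_def diag_scale by (simp add: mult.assoc)

lemma realizes_mult_eq_scale:
  assumes \<sigma>: "range \<sigma> \<subseteq> {0, 1}" and x: "realizes x \<sigma>" and y: "realizes y \<tau>"
    and \<tau>: "\<And>j. \<sigma> j \<noteq> 0 \<Longrightarrow> \<tau> j = c"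
  shows "y * x = c * x"
proof (rule realizes_unique)
  have "realizes (y * x) (\<lambda>j. \<tau> j * \<sigma> j)"
    by (rule realizes_mult[OF \<sigma> x y])
  also have "(\<lambda>j. \<tau> j * \<sigma> j) = (\<lambda>j. c * \<sigma> j)"
    using \<tau> by (metis mult_zero_right)
  finally show "realizes (y * x) (\<lambda>j. c * \<sigma> j)" .
  show "realizes (c * x) (\<lambda>j. c * \<sigma> j)"
    using realizes_scale[OF x] .
qed

lemma realizes_mult_f:
  assumes "realizes x \<sigma>"
  shows "x * f l = \<sigma> l * f l"
proof -
  have "x * f l = diag \<sigma> (\<pi> (f l))"
    using assms f_in_dsum dsum_subset unfolding realizes_def by blast
  then show ?thesis
    by (simp add: \<pi>_id[OF f_in_dsum] diag_f)
qed

end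

section \<open>Supports with respect to a basis\<close>

locale K_algebra_basis =
  fixes scale :: "'k::field \<Rightarrow> 'r::ring_1 \<Rightarrow> 'r" and B :: "'r set"
  assumes K_algebra: "is_K_algebra scale" and basis: "is_basis scale B"
begin

sublocale V: vector_space scale
  using K_algebra unfolding is_K_algebra_def by auto

abbreviation rep :: "'r \<Rightarrow> 'r \<Rightarrow> 'k" where
  "rep \<equiv> V.representation B"

lemma independent_B: "V.independent B"
  using basis unfolding is_basis_def by auto

lemma in_span_B: "x \<in> V.span B"
  using basis unfolding is_basis_def by auto

lemma supp_eq: "supp scale B x = {b. rep x b \<noteq> 0}"
  unfolding supp_def using V.representation_ne_zero by auto

lemma finite_supp: "finite (supp scale B x)"
  unfolding supp_eq by (rule V.finite_representation)

lemma supp_subset_B: "supp scale B x \<subseteq> B"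
  unfolding supp_def by auto

lemma sum_supp: "(\<Sum>b\<in>supp scale B x. scale (rep x b) b) = x"
  unfolding supp_eq using V.sum_nonzero_representation_eq[OF independent_B in_span_B] by simp

lemma rep_sum: "rep (sum v I) b = (\<Sum>i\<in>I. rep (v i) b)"
  using V.representation_sum[OF independent_B in_span_B] by metis

lemma rep_scale: "rep (scale c v) b = c * rep v b"
  using V.representation_scale[OF independent_B in_span_B] by simp

lemma rep_add: "rep (u + v) b = rep u b + rep v b"
  using V.representation_add[OF independent_B in_span_B in_span_B] by simp

lemma rep_basis: "t \<in> B \<Longrightarrow> rep t b = (if b = t then 1 else 0)"
  using V.representation_basis[OF independent_B] by simp

lemma supp_empty_iff: "supp scale B x = {} \<longleftrightarrow> x = 0"
  using sum_supp[of x] by (auto simp: supp_eq V.representation_zero)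

lemma supp_zero: "supp scale B 0 = {}"
  using supp_empty_iff by simp

lemma scale_mult_left: "scale a u * w = scale a (u * w)"
  using K_algebra unfolding is_K_algebra_def by auto

lemma scale_mult_right: "u * scale a w = scale a (u * w)"
  using K_algebra unfolding is_K_algebra_def by metis

lemma supp_mult_subset:
  "supp scale B (x * y) \<subseteq> (\<Union>(b, b') \<in> supp scale B x \<times> supp scale B y. supp scale B (b * b'))"
proof
  fix t assume t: "t \<in> supp scale B (x * y)"
  let ?Sx = "supp scale B x" and ?Sy = "supp scale B y"
  have "x * y = (\<Sum>b\<in>?Sx. scale (rep x b) b) * (\<Sum>b'\<in>?Sy. scale (rep y b') b')"
    by (simp only: sum_supp)
  also have "\<dots> = (\<Sum>b\<in>?Sx. \<Sum>b'\<in>?Sy. scale (rep x b * rep y b') (b * b'))"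
    by (simp add: sum_product scale_mult_left scale_mult_right mult.commute)
  finally have "rep (x * y) t = (\<Sum>b\<in>?Sx. \<Sum>b'\<in>?Sy. rep x b * rep y b' * rep (b * b') t)"
    by (simp add: rep_sum rep_scale)
  moreover have "rep (x * y) t \<noteq> 0"
    using t by (simp add: supp_eq)
  ultimately obtain b b' where "b \<in> ?Sx" "b' \<in> ?Sy" "rep (b * b') t \<noteq> 0"
    by (metis (no_types, lifting) mult_zero_right sum.neutral)
  then show "t \<in> (\<Union>(b, b') \<in> ?Sx \<times> ?Sy. supp scale B (b * b'))"
    unfolding supp_eq by blast
qed

lemma cs_mult_le:
  assumes "k_bounded scale B k"
  shows "cs scale B (x * y) \<le> k * cs scale B x * cs scale B y"
proof -
  let ?Sx = "supp scale B x" and ?Sy = "supp scale B y"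
  have fin: "finite (?Sx \<times> ?Sy)"
    using finite_supp by auto
  have "cs scale B (x * y) \<le> card (\<Union>(b, b') \<in> ?Sx \<times> ?Sy. supp scale B (b * b'))"
    unfolding cs_def by (rule card_mono) (use fin finite_supp supp_mult_subset in auto)
  also have "\<dots> \<le> (\<Sum>(b, b') \<in> ?Sx \<times> ?Sy. card (supp scale B (b * b')))"
    using card_UN_le[OF fin, of "\<lambda>(b, b'). supp scale B (b * b')"] by (simp add: case_prod_beta)
  also have "\<dots> \<le> (\<Sum>(b, b') \<in> ?Sx \<times> ?Sy. k)"
    using assms supp_subset_B unfolding k_bounded_def cs_def
    by (intro sum_mono) (auto simp: subset_iff)
  also have "\<dots> = k * cs scale B x * cs scale B y"
    by (simp add: card_cartesian_product cs_def)
  finally show ?thesis .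
qed

lemma exists_in_span_avoiding:
  assumes S: "finite S" "V.independent S" and T: "finite T" "T \<subseteq> B" and "card T < card S"
  obtains u where "u \<in> V.span S" and "u \<noteq> 0" and "supp scale B u \<inter> T = {}"
proof -
  \<comment> \<open>the coordinate projection onto \<open>span T\<close> cannot be injective on the larger space \<open>span S\<close>\<close>
  define P where "P x = (\<Sum>t\<in>T. scale (rep x t) t)" for x
  have rep_P: "rep (P x) t = rep x t" if "t \<in> T" for x t
    using T that by (simp add: P_def rep_sum rep_scale rep_basis subset_iff if_distrib cong: if_cong)
  interpret P: module_hom scale scale P
    by (simp add: module_hom_iff V.module_axioms P_def rep_add rep_scale
        scaleR_add_left sum.distrib V.scale_left_distrib V.scale_sum_right V.scale_scale)
  have "P ` S \<subseteq> V.span T"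
    unfolding P_def by (intro image_subsetI V.span_sum V.span_scale V.span_base)
  then have "\<not> V.independent (P ` S) \<or> \<not> inj_on P S"
    using V.independent_span_bound[OF T(1)] card_image \<open>card T < card S\<close> by fastforce
  then have "\<not> inj_on P (V.span S)"
    using P.independent_injective_image[OF S(2)] inj_on_subset[OF _ V.span_superset] by blast
  then obtain u where u: "u \<in> V.span S" "u \<noteq> 0" and "P u = 0"
    using P.inj_on_iff_eq_0[OF V.subspace_span] by blast
  then have "supp scale B u \<inter> T = {}"
    using rep_P[of _ u] by (auto simp: supp_eq V.representation_zero)
  with u show thesis
    by (rule that)
qed

lemma supp_add_subset: "supp scale B (x + y) \<subseteq> supp scale B x \<union> supp scale B y"
  by (auto simp: supp_eq rep_add)

lemma supp_scale_subset: "supp scale B (scale c x) \<subseteq> supp scale B x"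
  by (auto simp: supp_eq rep_scale)

lemma supp_add_disjoint:
  assumes "supp scale B x \<inter> supp scale B y = {}"
  shows "supp scale B (x + y) = supp scale B x \<union> supp scale B y"
proof
  show "supp scale B (x + y) \<subseteq> supp scale B x \<union> supp scale B y"
    by (rule supp_add_subset)
  show "supp scale B x \<union> supp scale B y \<subseteq> supp scale B (x + y)"
  proof
    fix t assume t: "t \<in> supp scale B x \<union> supp scale B y"
    have "rep x t = 0 \<or> rep y t = 0"
      using assms unfolding supp_eq by blast
    with t show "t \<in> supp scale B (x + y)"
      by (auto simp: supp_eq rep_add)
  qed
qed

lemma cs_add_disjoint:
  "supp scale B x \<inter> supp scale B y = {} \<Longrightarrow> cs scale B (x + y) = cs scale B x + cs scale B y"
  unfolding cs_def by (simp add: supp_add_disjoint card_Un_disjoint finite_supp)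

lemma supp_span_subset:
  assumes "w \<in> V.span S"
  shows "supp scale B w \<subseteq> (\<Union>s\<in>S. supp scale B s)"
proof -
  have subspace: "V.subspace {x. supp scale B x \<subseteq> (\<Union>s\<in>S. supp scale B s)}"
  proof (rule V.subspaceI)
    show "0 \<in> {x. supp scale B x \<subseteq> (\<Union>s\<in>S. supp scale B s)}"
      by (simp add: supp_zero)
  next
    fix x y assume "x \<in> {x. supp scale B x \<subseteq> (\<Union>s\<in>S. supp scale B s)}"
      and "y \<in> {x. supp scale B x \<subseteq> (\<Union>s\<in>S. supp scale B s)}"
    then show "x + y \<in> {x. supp scale B x \<subseteq> (\<Union>s\<in>S. supp scale B s)}"
      using supp_add_subset[of x y] by blast
  next
    fix c x assume "x \<in> {x. supp scale B x \<subseteq> (\<Union>s\<in>S. supp scale B s)}"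
    then show "scale c x \<in> {x. supp scale B x \<subseteq> (\<Union>s\<in>S. supp scale B s)}"
      using supp_scale_subset[of c x] by blast
  qed
  have "S \<subseteq> {x. supp scale B x \<subseteq> (\<Union>s\<in>S. supp scale B s)}"
    by auto
  then show ?thesis
    using V.span_minimal[OF _ subspace] assms by blast
qed

lemma exists_large_supp_in_span:
  assumes S: "finite S" "V.independent S"
  obtains w where "w \<in> V.span S" and "card S \<le> cs scale B w"
proof -
  \<comment> \<open>a vector of maximal support in \<open>span S\<close> has at least \<open>card S\<close> coordinates\<close>
  define D where "D = (\<Union>s\<in>S. supp scale B s)"
  have "finite D"
    unfolding D_def using S(1) finite_supp by blast
  have bound: "\<forall>y. y \<in> V.span S \<longrightarrow> cs scale B y < Suc (card D)"
  proof (intro allI impI)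
    fix y assume "y \<in> V.span S"
    then have "supp scale B y \<subseteq> D"
      unfolding D_def by (rule supp_span_subset)
    then show "cs scale B y < Suc (card D)"
      unfolding cs_def using card_mono[OF \<open>finite D\<close>] by (simp add: less_Suc_eq_le)
  qed
  obtain w where w: "w \<in> V.span S" and w_max: "\<And>y. y \<in> V.span S \<Longrightarrow> cs scale B y \<le> cs scale B w"
    using ex_has_greatest_nat[where P = "\<lambda>y. y \<in> V.span S" and f = "cs scale B", OF V.span_zero bound]
    by blast
  have "card S \<le> cs scale B w"
  proof (rule ccontr)
    let ?T = "supp scale B w"
    assume "\<not> card S \<le> cs scale B w"
    then have "card ?T < card S"
      unfolding cs_def by simp
    then obtain u where u: "u \<in> V.span S" "u \<noteq> 0" "supp scale B u \<inter> ?T = {}"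
      by (rule exists_in_span_avoiding[OF S finite_supp supp_subset_B])
    then have "cs scale B (w + u) = cs scale B w + cs scale B u"
      by (intro cs_add_disjoint) blast
    moreover have "cs scale B u > 0"
      using u(2) finite_supp supp_empty_iff unfolding cs_def by (simp add: card_gt_0_iff)
    moreover have "cs scale B (w + u) \<le> cs scale B w"
      using w u(1) w_max V.span_add by blast
    ultimately show False
      by simp
  qed
  with w show thesis
    by (rule that)
qed

lemma subspace_left_multiples: "V.subspace (range (\<lambda>r. r * x))"
proof (rule V.subspaceI)
  show "0 \<in> range (\<lambda>r. r * x)"
    by (rule range_eqI[of _ _ 0]) simp
next
  fix y z assume "y \<in> range (\<lambda>r. r * x)" "z \<in> range (\<lambda>r. r * x)"
  then show "y + z \<in> range (\<lambda>r. r * x)"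
    by (auto simp: distrib_right[symmetric])
next
  fix c y assume "y \<in> range (\<lambda>r. r * x)"
  then show "scale c y \<in> range (\<lambda>r. r * x)"
    by (auto simp: scale_mult_left[symmetric])
qed

lemma independent_if_right_dual:
  assumes "finite J" and dual: "\<And>j l. j \<in> J \<Longrightarrow> l \<in> J \<Longrightarrow> u j * e l = (if j = l then e l else 0)"
    and nonzero: "\<And>l. l \<in> J \<Longrightarrow> e l \<noteq> 0"
  shows "inj_on u J" and "V.independent (u ` J)"
proof -
  show inj: "inj_on u J"
  proof
    fix j l assume jl: "j \<in> J" "l \<in> J" "u j = u l"
    then have "u l * e j = e j"
      using dual[of j j] by simp
    show "j = l"
    proof (rule ccontr)
      assume "j \<noteq> l"
      then have "u l * e j = 0"
        using dual[of l j] jl by simp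
      then show False
        using \<open>u l * e j = e j\<close> nonzero[OF jl(1)] by simp
    qed
  qed
  show "V.independent (u ` J)"
  proof (rule V.independent_if_scalars_zero)
    fix c y assume sum: "(\<Sum>y\<in>u ` J. scale (c y) y) = 0" and "y \<in> u ` J"
    then obtain l where l: "l \<in> J" "y = u l"
      by blast
    have "0 = (\<Sum>y\<in>u ` J. scale (c y) y) * e l"
      using sum by simp
    also have "\<dots> = (\<Sum>j\<in>J. scale (c (u j)) (u j * e l))"
      by (simp add: sum.reindex[OF inj] sum_distrib_right scale_mult_left)
    also have "\<dots> = scale (c (u l)) (e l)"
      using l(1) \<open>finite J\<close> by (simp add: dual if_distrib cong: if_cong)
    finally show "c y = 0"
      using l nonzero by simp
  qed (use \<open>finite J\<close> in simp)
qed

lemma left_multiples_unbounded_supp: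
  assumes "orthogonal_idempotents f" and "infinite A" and fixed: "\<And>l. l \<in> A \<Longrightarrow> x * f l = f l"
  obtains r where "n \<le> cs scale B (r * x)"
proof -
  interpret orthogonal_idempotents f by fact
  obtain J where J: "finite J" "card J = n" "J \<subseteq> A"
    using infinite_arbitrarily_large[OF \<open>infinite A\<close>] by blast
  have dual: "f j * x * f l = (if j = l then f l else 0)" if "j \<in> J" "l \<in> J" for j l
    using fixed[of l] that J(3) idem orth by (auto simp: mult.assoc)
  have "inj_on (\<lambda>j. f j * x) J" "V.independent ((\<lambda>j. f j * x) ` J)"
    using independent_if_right_dual[OF J(1) dual nonzero] by blast+
  moreover have "finite ((\<lambda>j. f j * x) ` J)"
    using J(1) by blast
  ultimately obtain w where w: "w \<in> V.span ((\<lambda>j. f j * x) ` J)" "n \<le> cs scale B w"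
    using exists_large_supp_in_span card_image J(2) by metis
  have "V.span ((\<lambda>j. f j * x) ` J) \<subseteq> range (\<lambda>r. r * x)"
    by (rule V.span_minimal[OF _ subspace_left_multiples]) blast
  with w show thesis
    using that by blast
qed

end

section \<open>Bounded bases exclude infinite orthogonal families\<close>

lemma infinite_prod_decode_fiber: "infinite {j. fst (prod_decode j) = i}"
proof -
  have "inj (\<lambda>t. prod_encode (i, t))"
    by (simp add: inj_on_def prod_encode_eq)
  then have "infinite (range (\<lambda>t. prod_encode (i, t)))"
    using finite_imageD by blast
  moreover have "range (\<lambda>t. prod_encode (i, t)) \<subseteq> {j. fst (prod_decode j) = i}"
    by auto
  ultimately show ?thesis
    using infinite_super by blast
qed

lemma (in K_algebra_basis) no_orthogonal_idempotents:
  assumes reg: "von_Neumann_regular TYPE('r)" and inj: "right_self_injective TYPE('r)"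
    and bounded: "k_bounded scale B k"
  shows "\<nexists>f :: nat \<Rightarrow> 'r. orthogonal_idempotents f"
proof
  assume "\<exists>f :: nat \<Rightarrow> 'r. orthogonal_idempotents f"
  then obtain f :: "nat \<Rightarrow> 'r" where f: "orthogonal_idempotents f"
    by blast
  then interpret O: orthogonal_idempotents f .
  obtain E \<pi> where "right_ideal E" "O.dsum \<subseteq> E" "right_hom_on E \<pi>" "\<pi> ` E \<subseteq> O.dsum"
    "\<And>w. w \<in> O.dsum \<Longrightarrow> \<pi> w = w" "\<And>z. (\<And>v. v \<in> E \<Longrightarrow> z * v = 0) \<Longrightarrow> z = 0"
    using right_ideal_retract_of_faithful[OF reg O.right_ideal_dsum] by blast
  then interpret R: dsum_retract f E \<pi>
    by unfold_locales blast+
  \<comment> \<open>split the index set into infinitely many infinite blocks \<open>{j. block j = i}\<close>\<close>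
  define block where "block j = fst (prod_decode j)" for j
  define \<sigma> where "\<sigma> i j = (if block j = i then 1 else 0 :: 'r)" for i j
  have \<sigma>_01: "range (\<sigma> i) \<subseteq> {0, 1}" for i
    unfolding \<sigma>_def by auto
  have "\<forall>i. \<exists>x. R.realizes x (\<sigma> i)"
    using R.exists_realizes[OF inj] by metis
  then obtain x where x: "\<And>i. R.realizes (x i) (\<sigma> i)"
    by metis
  have "\<exists>r. k * i * cs scale B (x i) < cs scale B (r * x i)" for i
  proof -
    have "x i * f l = f l" if "l \<in> {j. block j = i}" for l
      using R.realizes_mult_f[OF x] that by (simp add: \<sigma>_def)
    then show ?thesis
      using left_multiples_unbounded_supp[OF f infinite_prod_decode_fiber[of i, folded block_def]]
      by (metis Suc_le_eq)
  qed
  then obtain r where r: "\<And>i. k * i * cs scale B (x i) < cs scale B (r i * x i)"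
    by metis
  obtain g where g: "R.realizes g (\<lambda>j. r (block j))"
    using R.exists_realizes[OF inj] by blast
  have "g * x i = r i * x i" for i
    by (rule R.realizes_mult_eq_scale[OF \<sigma>_01 x g]) (simp add: \<sigma>_def split: if_splits)
  \<comment> \<open>so the one element \<open>g\<close> would produce supports of unbounded size relative to \<open>cs g\<close>\<close>
  then show False
    using cs_mult_le[OF bounded, of g "x (cs scale B g)"] r[of "cs scale B g"]
    by (simp add: mult.commute)
qed

theorem lemma5p4:
  fixes scale :: "'k::field \<Rightarrow> 'r::ring_1 \<Rightarrow> 'r"
    and B :: "'r set"
  assumes "is_K_algebra scale"
    and "von_Neumann_regular TYPE('r)"
    and "right_self_injective TYPE('r)"
    and "bounded_basis scale B"
  shows "completely_reducible TYPE('r)"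
proof -
  obtain k where "is_basis scale B" and bounded: "k_bounded scale B k"
    using assms(4) unfolding bounded_basis_def by blast
  with assms(1) interpret K_algebra_basis scale B
    by unfold_locales
  show ?thesis
    using completely_reducible_if_no_orthogonal_idempotents[OF assms(2)]
      no_orthogonal_idempotents[OF assms(2,3) bounded] by blast
qed

end
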